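(* Let $G$ be a countable graph with maximal degree $\le\mathrm{D}$ and $H=\mathcal{A}+V$ on $\ell^2(G)$, with $\mathcal{A}$ the adjacency matrix and $V$ a bounded real potential. Fix $o\in G$, let $|x|=d(x,o)$ be the graph distance and $(x^m\psi)(x)=|x|^m\psi(x)$. Then for each $m\in\mathbb{N}$ there are polynomials $p_0,\dots,p_m$ (depending on $m$ but not on $\psi$ or $t$), with $p_k$ of degree $k$, $p_0\equiv1$, and the leading term of $p_m(t)$ equal to $\mathrm{D}^mt^m$, such that for every $t\ge0$ and every $\psi\in\ell^2(G)$ with $\|x^m\psi\|<\infty$, $$\|x^me^{-\mathrm{i}tH}\psi\|\le\sum_{r=0}^mp_{m-r}(t)\|x^r\psi\|.$$ In particular, $\limsup_{t\to+\infty}\|x^me^{-\mathrm{i}tH}\psi\|/t^m\le\mathrm{D}^m\|\psi\|$. *)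

theory Defs
  imports "HOL-Analysis.Analysis" "HOL-Computational_Algebra.Polynomial"
begin

definition edges :: "('v \<Rightarrow> 'v \<Rightarrow> bool) \<Rightarrow> ('v \<times> 'v) set" where
  "edges E = {(a, b). E a b}"

definition gdist :: "('v \<Rightarrow> 'v \<Rightarrow> bool) \<Rightarrow> 'v \<Rightarrow> 'v \<Rightarrow> nat" where
  "gdist E x y = (LEAST n. (x, y) \<in> edges E ^^ n)"

definition in_l2 :: "('v \<Rightarrow> complex) \<Rightarrow> bool" where
  "in_l2 \<psi> \<longleftrightarrow> (\<lambda>x. (cmod (\<psi> x))\<^sup>2) summable_on UNIV"

definition l2norm :: "('v \<Rightarrow> complex) \<Rightarrow> real" where
  "l2norm \<psi> = sqrt (\<Sum>\<^sub>\<infinity>x. (cmod (\<psi> x))\<^sup>2)"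

definition wfin :: "('v \<Rightarrow> 'v \<Rightarrow> bool) \<Rightarrow> 'v \<Rightarrow> nat \<Rightarrow> ('v \<Rightarrow> complex) \<Rightarrow> bool" where
  "wfin E ob m \<psi> \<longleftrightarrow>
     (\<lambda>x. (real (gdist E x ob)) ^ (2 * m) * (cmod (\<psi> x))\<^sup>2) summable_on UNIV"

definition wnorm :: "('v \<Rightarrow> 'v \<Rightarrow> bool) \<Rightarrow> 'v \<Rightarrow> nat \<Rightarrow> ('v \<Rightarrow> complex) \<Rightarrow> real" where
  "wnorm E ob m \<psi> =
     sqrt (\<Sum>\<^sub>\<infinity>x. (real (gdist E x ob)) ^ (2 * m) * (cmod (\<psi> x))\<^sup>2)"

definition adjop :: "('v \<Rightarrow> 'v \<Rightarrow> bool) \<Rightarrow> ('v \<Rightarrow> complex) \<Rightarrow> 'v \<Rightarrow> complex" where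
  "adjop E \<psi> x = (\<Sum>y\<in>{y. E x y}. \<psi> y)"

definition ham :: "('v \<Rightarrow> 'v \<Rightarrow> bool) \<Rightarrow> ('v \<Rightarrow> real) \<Rightarrow> ('v \<Rightarrow> complex) \<Rightarrow> 'v \<Rightarrow> complex" where
  "ham E V \<psi> x = adjop E \<psi> x + complex_of_real (V x) * \<psi> x"

text \<open>e^{-itH} psi, via the exponential series of the bounded operator H
  (evaluated pointwise; the series converges in l^2 and hence pointwise).\<close>
definition evol :: "('v \<Rightarrow> 'v \<Rightarrow> bool) \<Rightarrow> ('v \<Rightarrow> real) \<Rightarrow> real \<Rightarrow> ('v \<Rightarrow> complex) \<Rightarrow> 'v \<Rightarrow> complex" where
  "evol E V t \<psi> x =
     (\<Sum>n. ((- \<i> * complex_of_real t) ^ n / of_nat (fact n)) * ((ham E V ^^ n) \<psi>) x)"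

end

(*
  Write K = -iH, so that e^{-itH} = exp (tK) with K skew-adjoint. For a bounded weight w that is
  1-Lipschitz along edges, skew-adjointness leaves only the commutator in
    d/dt ||w^m u||^2 = 2 <w^m u, [w^m, K] u>,   u = exp (tK) psi,
  and since |w(x)^m - w(y)^m| <= sum_{k<m} C(m,k) w(y)^k for adjacent x, y, the commutator is
  bounded by D sum_{k<m} C(m,k) ||w^k u||. By induction on m and comparison, ||w^m u|| is dominated
  by the solution of the hierarchy v_m' = D sum_{k<m} C(m,k) v_k, v_m(0) = ||w^m psi||, namely
  sum_{r<=m} C(m,r) T_{m-r}(D t) ||w^r psi|| with T_n the Touchard polynomials: they satisfy
  T_n' = sum_{j<n} C(n,j) T_j and T_n is monic of degree n. The graph distance truncated at its
  maximum on a finite set is such a weight and agrees with |x| there, so the bound holds for |x|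
  itself; the limsup follows because only the term r = 0 has degree m.
*)

theory Submission
  imports Defs
begin

section \<open>The Hilbert space \<open>\<ell>\<^sup>2\<close>\<close>

lemma in_l2_zero [simp]: "in_l2 (\<lambda>_. 0)"
  by (simp add: in_l2_def)

lemma in_l2_mono: "in_l2 f \<Longrightarrow> (\<And>x. cmod (g x) \<le> cmod (f x)) \<Longrightarrow> in_l2 g"
  unfolding in_l2_def
  by (rule summable_on_comparison_test[where f="\<lambda>x. (cmod (f x))\<^sup>2"]) (auto intro: power_mono)

lemma cmod_add_power2_le: "(cmod (a + b))\<^sup>2 \<le> 2 * (cmod a)\<^sup>2 + 2 * (cmod b)\<^sup>2"
proof -
  have "(cmod (a + b))\<^sup>2 \<le> (cmod a + cmod b)\<^sup>2"
    by (simp add: power_mono norm_triangle_ineq)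
  also have "\<dots> \<le> 2 * (cmod a)\<^sup>2 + 2 * (cmod b)\<^sup>2"
    using zero_le_power2[of "cmod a - cmod b"] by (simp add: power2_eq_square algebra_simps)
  finally show ?thesis .
qed

lemma in_l2_add:
  assumes "in_l2 f" "in_l2 g"
  shows "in_l2 (\<lambda>x. f x + g x)"
proof -
  have "(\<lambda>x. 2 * (cmod (f x))\<^sup>2 + 2 * (cmod (g x))\<^sup>2) summable_on UNIV"
    using assms unfolding in_l2_def by (intro summable_on_add summable_on_cmult_right)
  then show ?thesis
    unfolding in_l2_def by (rule summable_on_comparison_test) (simp_all add: cmod_add_power2_le)
qed

lemma in_l2_mult_bounded:
  assumes "in_l2 f" "\<And>x. cmod (a x) \<le> c"
  shows "in_l2 (\<lambda>x. a x * f x)"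
proof (rule in_l2_mono[where f="\<lambda>x. of_real c * f x"])
  show "in_l2 (\<lambda>x. of_real c * f x)"
    using assms(1) unfolding in_l2_def
    by (simp add: norm_mult power_mult_distrib summable_on_cmult_right)
  fix x
  have "cmod (a x) \<le> \<bar>c\<bar>"
    using assms(2)[of x] by simp
  then show "cmod (a x * f x) \<le> cmod (of_real c * f x)"
    by (simp add: norm_mult mult_right_mono)
qed

lemma in_l2_diff: "in_l2 f \<Longrightarrow> in_l2 g \<Longrightarrow> in_l2 (\<lambda>x. f x - g x)"
  using in_l2_add[of f "\<lambda>x. -1 * g x"] in_l2_mult_bounded[of g "\<lambda>_. -1" 1] by simp

lemma norm_cnj_mult_le: "cmod (cnj a * b) \<le> (cmod a)\<^sup>2 + (cmod b)\<^sup>2"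
proof -
  have "2 * (cmod a * cmod b) \<le> (cmod a)\<^sup>2 + (cmod b)\<^sup>2"
    using zero_le_power2[of "cmod a - cmod b"] by (simp add: power2_eq_square algebra_simps)
  moreover have "0 \<le> cmod a * cmod b" "cmod (cnj a * b) = cmod a * cmod b"
    by (simp_all add: norm_mult)
  ultimately show ?thesis
    by linarith
qed

lemma abs_summable_inner_l2:
  assumes "in_l2 f" "in_l2 g"
  shows "(\<lambda>x. norm (cnj (f x) * g x)) summable_on UNIV"
proof -
  have "(\<lambda>x. (cmod (f x))\<^sup>2 + (cmod (g x))\<^sup>2) summable_on UNIV"
    using assms unfolding in_l2_def by (rule summable_on_add)
  then show ?thesis
    by (rule summable_on_comparison_test) (simp_all add: norm_cnj_mult_le)
qed

typedef 'a l2 = "{f :: 'a \<Rightarrow> complex. in_l2 f}"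
  morphisms l2_fun Abs_l2
  by (rule exI[of _ "\<lambda>_. 0"]) simp

setup_lifting type_definition_l2

lemma in_l2_l2_fun [simp]: "in_l2 (l2_fun f)"
  using l2_fun[of f] by simp

instantiation l2 :: (type) real_inner
begin

lift_definition zero_l2 :: "'a l2" is "\<lambda>_. 0"
  by simp

lift_definition plus_l2 :: "'a l2 \<Rightarrow> 'a l2 \<Rightarrow> 'a l2" is "\<lambda>f g x. f x + g x"
  by (rule in_l2_add)

lift_definition uminus_l2 :: "'a l2 \<Rightarrow> 'a l2" is "\<lambda>f x. - f x"
  by (simp add: in_l2_def)

lift_definition minus_l2 :: "'a l2 \<Rightarrow> 'a l2 \<Rightarrow> 'a l2" is "\<lambda>f g x. f x - g x"
  by (rule in_l2_diff)

lift_definition scaleR_l2 :: "real \<Rightarrow> 'a l2 \<Rightarrow> 'a l2" is "\<lambda>r f x. of_real r * f x"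
  by (rule in_l2_mult_bounded) auto

definition inner_l2 :: "'a l2 \<Rightarrow> 'a l2 \<Rightarrow> real" where
  "inner_l2 f g = (\<Sum>\<^sub>\<infinity>x. Re (cnj (l2_fun f x) * l2_fun g x))"

definition norm_l2 :: "'a l2 \<Rightarrow> real" where
  "norm_l2 f = l2norm (l2_fun f)"

definition dist_l2 :: "'a l2 \<Rightarrow> 'a l2 \<Rightarrow> real" where
  "dist_l2 f g = norm (f - g)"

definition sgn_l2 :: "'a l2 \<Rightarrow> 'a l2" where
  "sgn_l2 f = inverse (norm f) *\<^sub>R f"

definition uniformity_l2 :: "('a l2 \<times> 'a l2) filter" where
  "uniformity_l2 = (INF e\<in>{0<..}. principal {(x, y). dist x y < e})"

definition open_l2 :: "'a l2 set \<Rightarrow> bool" where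
  "open_l2 U = (\<forall>x\<in>U. \<forall>\<^sub>F (x', y) in uniformity. x' = x \<longrightarrow> y \<in> U)"

instance
proof
  fix a b c :: "'a l2" and r s :: real
  have summable_Re: "(\<lambda>x. Re (cnj (l2_fun f x) * l2_fun g x)) summable_on UNIV" for f g :: "'a l2"
    by (rule summable_on_Re, rule abs_summable_summable, rule abs_summable_inner_l2) simp_all
  have Re_cnj_self: "Re (cnj z * z) = (cmod z)\<^sup>2" for z
    by (simp add: cmod_power2, simp add: power2_eq_square)
  show "a + b + c = a + (b + c)" by transfer (simp add: algebra_simps)
  show "a + b = b + a" by transfer (simp add: algebra_simps)
  show "0 + a = a" by transfer simp
  show "- a + a = 0" by transfer simp
  show "a - b = a + - b" by transfer simp
  show "r *\<^sub>R (a + b) = r *\<^sub>R a + r *\<^sub>R b" by transfer (simp add: algebra_simps)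
  show "(r + s) *\<^sub>R a = r *\<^sub>R a + s *\<^sub>R a" by transfer (simp add: algebra_simps)
  show "r *\<^sub>R s *\<^sub>R a = (r * s) *\<^sub>R a" by transfer (simp add: algebra_simps)
  show "1 *\<^sub>R a = a" by transfer simp
  show "dist a b = norm (a - b)" by (simp add: dist_l2_def)
  show "sgn a = inverse (norm a) *\<^sub>R a" by (simp add: sgn_l2_def)
  show "inner a b = inner b a"
    unfolding inner_l2_def by (rule infsum_cong) (simp add: algebra_simps)
  show "inner (a + b) c = inner a c + inner b c"
    unfolding inner_l2_def plus_l2.rep_eq
    by (subst infsum_add[OF summable_Re summable_Re, symmetric])
      (simp only: complex_cnj_add distrib_right plus_complex.sel)
  show "inner (r *\<^sub>R a) b = r * inner a b"
  proof -
    have "(\<Sum>\<^sub>\<infinity>x. Re (cnj (of_real r * l2_fun a x) * l2_fun b x))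
        = (\<Sum>\<^sub>\<infinity>x. r * Re (cnj (l2_fun a x) * l2_fun b x))"
      by (rule infsum_cong) (simp add: algebra_simps)
    then show ?thesis
      unfolding inner_l2_def scaleR_l2.rep_eq by (simp only: infsum_cmult_right')
  qed
  show "0 \<le> inner a a"
    unfolding inner_l2_def Re_cnj_self by (simp add: infsum_nonneg)
  show "inner a a = 0 \<longleftrightarrow> a = 0"
  proof
    assume "inner a a = 0"
    then have "(cmod (l2_fun a x))\<^sup>2 = 0" for x
      unfolding inner_l2_def Re_cnj_self
      by (intro nonneg_infsum_le_0D[where A=UNIV]) (use in_l2_l2_fun[of a] in \<open>auto simp: in_l2_def\<close>)
    then show "a = 0"
      by transfer auto
  qed (simp add: inner_l2_def zero_l2.rep_eq)
  show "norm a = sqrt (inner a a)"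
    unfolding norm_l2_def l2norm_def inner_l2_def Re_cnj_self ..
qed (simp_all add: uniformity_l2_def open_l2_def)

end

declare plus_l2.rep_eq [simp] minus_l2.rep_eq [simp] uminus_l2.rep_eq [simp]
  scaleR_l2.rep_eq [simp] zero_l2.rep_eq [simp]

lemma l2_eqI: "(\<And>x. l2_fun f x = l2_fun g x) \<Longrightarrow> f = g"
  by (metis ext l2_fun_inject)

lemma l2_fun_Abs_l2 [simp]: "in_l2 f \<Longrightarrow> l2_fun (Abs_l2 f) = f"
  by (simp add: Abs_l2_inverse)

lemma l2_fun_sum: "l2_fun (sum f A) x = (\<Sum>a\<in>A. l2_fun (f a) x)"
  by (induction A rule: infinite_finite_induct) auto

lemma norm_l2_power2: "(norm f)\<^sup>2 = (\<Sum>\<^sub>\<infinity>x. (cmod (l2_fun f x))\<^sup>2)"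
  unfolding norm_l2_def l2norm_def by (simp add: infsum_nonneg)

lemma sum_le_norm_l2_power2:
  "finite F \<Longrightarrow> (\<Sum>x\<in>F. (cmod (l2_fun f x))\<^sup>2) \<le> (norm f)\<^sup>2"
  unfolding norm_l2_power2
  by (rule finite_sum_le_infsum) (use in_l2_l2_fun[of f] in \<open>auto simp: in_l2_def\<close>)

lemma norm_l2_fun_le: "cmod (l2_fun f x) \<le> norm f"
proof (rule power2_le_imp_le)
  show "(cmod (l2_fun f x))\<^sup>2 \<le> (norm f)\<^sup>2"
    using sum_le_norm_l2_power2[of "{x}" f] by simp
qed simp

lemma l2norm_mono:
  assumes "in_l2 g" "\<And>x. cmod (f x) \<le> cmod (g x)"
  shows "l2norm f \<le> l2norm g"
proof -
  have "in_l2 f"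
    using assms by (rule in_l2_mono)
  then have "(\<Sum>\<^sub>\<infinity>x. (cmod (f x))\<^sup>2) \<le> (\<Sum>\<^sub>\<infinity>x. (cmod (g x))\<^sup>2)"
    using assms by (intro infsum_mono) (auto simp: in_l2_def power_mono)
  then show ?thesis
    unfolding l2norm_def by (rule real_sqrt_le_mono)
qed

lemma norm_l2_mono: "(\<And>x. cmod (l2_fun f x) \<le> cmod (l2_fun g x)) \<Longrightarrow> norm f \<le> norm g"
  unfolding norm_l2_def by (rule l2norm_mono) simp_all

lemma in_l2_finite_sums_bounded:
  assumes "\<And>F. finite F \<Longrightarrow> (\<Sum>x\<in>F. (cmod (f x))\<^sup>2) \<le> C\<^sup>2" "0 \<le> C"
  shows "in_l2 f" "l2norm f \<le> C"
proof -
  show l2: "in_l2 f"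
    unfolding in_l2_def
    by (rule nonneg_bdd_above_summable_on) (use assms in \<open>auto intro!: bdd_aboveI\<close>)
  have "(\<Sum>\<^sub>\<infinity>x. (cmod (f x))\<^sup>2) \<le> C\<^sup>2"
    by (rule infsum_le_finite_sums) (use l2 assms in \<open>auto simp: in_l2_def\<close>)
  then show "l2norm f \<le> C"
    unfolding l2norm_def using assms(2) real_sqrt_le_mono by fastforce
qed

lemma l2norm_nonneg: "0 \<le> l2norm f"
  by (simp add: l2norm_def infsum_nonneg)

lemma bounded_linear_l2_fun: "bounded_linear (\<lambda>f. l2_fun f x)"
  by (rule bounded_linear_intro[where K=1]) (auto simp: norm_l2_fun_le scaleR_conv_of_real)

lemma l2_dist_pointwise_limit_le:
  assumes "Cauchy X" "\<And>x. (\<lambda>n. l2_fun (X n) x) \<longlonglongrightarrow> f x" "0 < e"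
  obtains M where "\<And>n. M \<le> n \<Longrightarrow> in_l2 (\<lambda>x. l2_fun (X n) x - f x)"
    "\<And>n. M \<le> n \<Longrightarrow> l2norm (\<lambda>x. l2_fun (X n) x - f x) \<le> e"
proof -
  obtain M where M: "\<And>m n. M \<le> m \<Longrightarrow> M \<le> n \<Longrightarrow> norm (X m - X n) < e"
    using CauchyD[OF assms(1,3)] by blast
  have partial_sums: "(\<Sum>x\<in>F. (cmod (l2_fun (X n) x - f x))\<^sup>2) \<le> e\<^sup>2" if "M \<le> n" "finite F" for n F
  proof -
    have "(\<lambda>m. \<Sum>x\<in>F. (cmod (l2_fun (X n) x - l2_fun (X m) x))\<^sup>2)
        \<longlonglongrightarrow> (\<Sum>x\<in>F. (cmod (l2_fun (X n) x - f x))\<^sup>2)"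
      by (intro tendsto_intros assms(2))
    moreover have "\<forall>\<^sub>F m in sequentially. (\<Sum>x\<in>F. (cmod (l2_fun (X n) x - l2_fun (X m) x))\<^sup>2) \<le> e\<^sup>2"
    proof (rule eventually_sequentiallyI)
      fix m
      assume "M \<le> m"
      have "(\<Sum>x\<in>F. (cmod (l2_fun (X n) x - l2_fun (X m) x))\<^sup>2) \<le> (norm (X n - X m))\<^sup>2"
        using sum_le_norm_l2_power2[OF \<open>finite F\<close>, of "X n - X m"] by simp
      also have "\<dots> \<le> e\<^sup>2"
        using M[OF \<open>M \<le> n\<close> \<open>M \<le> m\<close>] by (intro power_mono) auto
      finally show "(\<Sum>x\<in>F. (cmod (l2_fun (X n) x - l2_fun (X m) x))\<^sup>2) \<le> e\<^sup>2" .
    qed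
    ultimately show ?thesis
      by (rule tendsto_upperbound) simp
  qed
  have "in_l2 (\<lambda>x. l2_fun (X n) x - f x)" "l2norm (\<lambda>x. l2_fun (X n) x - f x) \<le> e" if "M \<le> n" for n
    using in_l2_finite_sums_bounded[OF partial_sums[OF that]] \<open>0 < e\<close> by simp_all
  then show ?thesis
    using that by blast
qed

instance l2 :: (type) complete_space
proof
  fix X :: "nat \<Rightarrow> 'a l2"
  assume "Cauchy X"
  define f where "f x = lim (\<lambda>n. l2_fun (X n) x)" for x
  have "Cauchy (\<lambda>n. l2_fun (X n) x)" for x
    using bounded_linear.Cauchy[OF bounded_linear_l2_fun \<open>Cauchy X\<close>] by simp
  then have lim: "(\<lambda>n. l2_fun (X n) x) \<longlonglongrightarrow> f x" for x
    unfolding f_def by (simp add: Cauchy_convergent_iff convergent_LIMSEQ_iff)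
  obtain M where "\<And>n. M \<le> n \<Longrightarrow> in_l2 (\<lambda>x. l2_fun (X n) x - f x)"
    using l2_dist_pointwise_limit_le[OF \<open>Cauchy X\<close> lim zero_less_one] by blast
  from in_l2_diff[OF in_l2_l2_fun[of "X M"] this[OF order_refl]] have f: "in_l2 f"
    by simp
  have "X \<longlonglongrightarrow> Abs_l2 f"
  proof (rule LIMSEQ_I)
    fix r :: real
    assume "0 < r"
    then have "0 < r / 2"
      by simp
    then obtain M where M: "\<And>n. M \<le> n \<Longrightarrow> l2norm (\<lambda>x. l2_fun (X n) x - f x) \<le> r / 2"
      using l2_dist_pointwise_limit_le[OF \<open>Cauchy X\<close> lim] by blast
    have "norm (X n - Abs_l2 f) < r" if "M \<le> n" for n
      using M[OF that] \<open>0 < r\<close> f by (simp add: norm_l2_def)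
    then show "\<exists>no. \<forall>n\<ge>no. norm (X n - Abs_l2 f) < r"
      by blast
  qed
  then show "convergent X"
    by (rule convergentI)
qed

instance l2 :: (type) banach ..

definition mult_l2 :: "('a \<Rightarrow> complex) \<Rightarrow> 'a l2 \<Rightarrow> 'a l2" where
  "mult_l2 a f = Abs_l2 (\<lambda>x. a x * l2_fun f x)"

context
  fixes a :: "'a \<Rightarrow> complex" and c :: real
  assumes a_bounded: "\<And>x. cmod (a x) \<le> c"
begin

lemma l2_fun_mult_l2: "l2_fun (mult_l2 a f) = (\<lambda>x. a x * l2_fun f x)"
  unfolding mult_l2_def by (simp add: in_l2_mult_bounded[OF _ a_bounded])

lemma norm_mult_l2_le: "norm (mult_l2 a f) \<le> c * norm f"
proof -
  have "0 \<le> c"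
    using a_bounded[of undefined] norm_ge_zero order_trans by blast
  have "norm (mult_l2 a f) \<le> norm (c *\<^sub>R f)"
    using a_bounded \<open>0 \<le> c\<close> by (intro norm_l2_mono) (simp add: l2_fun_mult_l2 norm_mult mult_right_mono)
  then show ?thesis
    using \<open>0 \<le> c\<close> by simp
qed

lemma bounded_linear_mult_l2: "bounded_linear (mult_l2 a)"
  by (rule bounded_linear_intro[where K=c])
    (auto intro!: l2_eqI simp: l2_fun_mult_l2 norm_mult_l2_le algebra_simps scaleR_conv_of_real)

end

definition abs_l2 :: "'a l2 \<Rightarrow> 'a l2" where
  "abs_l2 f = Abs_l2 (\<lambda>x. of_real (cmod (l2_fun f x)))"

lemma l2_fun_abs_l2 [simp]: "l2_fun (abs_l2 f) = (\<lambda>x. of_real (cmod (l2_fun f x)))"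
proof -
  have "in_l2 (\<lambda>x. of_real (cmod (l2_fun f x)))"
    by (rule in_l2_mono[OF in_l2_l2_fun[of f]]) simp
  then show ?thesis
    unfolding abs_l2_def by simp
qed

lemma norm_abs_l2 [simp]: "norm (abs_l2 f) = norm f"
  unfolding norm_l2_def by (simp add: l2norm_def)

section \<open>Exponential series of a bounded operator\<close>

lemma has_vector_derivative_series:
  fixes f f' :: "nat \<Rightarrow> real \<Rightarrow> 'a::banach"
  assumes S: "convex S" "open S" "a \<in> S" "x \<in> S"
    and deriv: "\<And>n t. t \<in> S \<Longrightarrow> (f n has_vector_derivative f' n t) (at t)"
    and unif: "uniform_limit S (\<lambda>n t. \<Sum>i<n. f' i t) g' sequentially"
    and summ: "summable (\<lambda>n. f n a)"
  shows "((\<lambda>t. \<Sum>n. f n t) has_vector_derivative g' x) (at x)"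
proof -
  have "\<exists>g. \<forall>t\<in>S. (\<lambda>n. f n t) sums g t \<and> (g has_derivative (\<lambda>h. h *\<^sub>R g' t)) (at t within S)"
  proof (rule has_derivative_series[where x=a])
    show "convex S" "a \<in> S"
      by (fact S)+
    show "(\<lambda>n. f n a) sums (\<Sum>n. f n a)"
      using summ by (rule summable_sums)
    show "(f n has_derivative (\<lambda>h. h *\<^sub>R f' n t)) (at t within S)" if "t \<in> S" for n t
      using deriv[OF that] unfolding has_vector_derivative_def by (rule has_derivative_at_withinI)
    show "\<forall>\<^sub>F n in sequentially. \<forall>t\<in>S. \<forall>h. norm ((\<Sum>i<n. h *\<^sub>R f' i t) - h *\<^sub>R g' t) \<le> e * norm h"
      if "0 < e" for e
      using uniform_limitD[OF unif that]
    proof eventually_elim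
      case (elim n)
      show ?case
      proof (intro ballI allI)
        fix t h
        assume "t \<in> S"
        have "norm ((\<Sum>i<n. h *\<^sub>R f' i t) - h *\<^sub>R g' t) = \<bar>h\<bar> * dist (\<Sum>i<n. f' i t) (g' t)"
          by (simp add: dist_norm flip: scaleR_sum_right scaleR_diff_right)
        also have "\<dots> \<le> \<bar>h\<bar> * e"
          using elim \<open>t \<in> S\<close> by (intro mult_left_mono) (auto simp: less_imp_le)
        finally show "norm ((\<Sum>i<n. h *\<^sub>R f' i t) - h *\<^sub>R g' t) \<le> e * norm h"
          by (simp add: mult.commute)
      qed
    qed
  qed
  then obtain g where g: "\<And>t. t \<in> S \<Longrightarrow> (\<lambda>n. f n t) sums g t"
      "\<And>t. t \<in> S \<Longrightarrow> (g has_derivative (\<lambda>h. h *\<^sub>R g' t)) (at t within S)"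
    by blast
  have "(g has_derivative (\<lambda>h. h *\<^sub>R g' x)) (at x)"
    using g(2)[OF \<open>x \<in> S\<close>] at_within_open[OF \<open>x \<in> S\<close> \<open>open S\<close>] by simp
  then have "((\<lambda>t. \<Sum>n. f n t) has_derivative (\<lambda>h. h *\<^sub>R g' x)) (at x)"
    by (rule has_derivative_transform_within_open[OF _ \<open>open S\<close> \<open>x \<in> S\<close>])
      (simp add: g(1) sums_unique)
  then show ?thesis
    unfolding has_vector_derivative_def .
qed

definition exp_op :: "('a::real_normed_vector \<Rightarrow> 'a) \<Rightarrow> real \<Rightarrow> 'a \<Rightarrow> 'a" where
  "exp_op K t x = (\<Sum>n. (t ^ n / fact n) *\<^sub>R (K ^^ n) x)"

lemma norm_funpow_le:
  fixes K :: "'a::real_normed_vector \<Rightarrow> 'a"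
  assumes "\<And>y. norm (K y) \<le> c * norm y" "0 \<le> c"
  shows "norm ((K ^^ n) x) \<le> c ^ n * norm x"
proof (induction n)
  case (Suc n)
  have "norm ((K ^^ Suc n) x) \<le> c * norm ((K ^^ n) x)"
    using assms(1)[of "(K ^^ n) x"] by simp
  also have "\<dots> \<le> c * (c ^ n * norm x)"
    using Suc assms(2) by (rule mult_left_mono)
  finally show ?case
    by (simp add: mult.assoc)
qed simp

lemma norm_exp_op_term_le:
  fixes K :: "'a::real_normed_vector \<Rightarrow> 'a"
  assumes "\<And>y. norm (K y) \<le> c * norm y" "0 \<le> c"
  shows "norm ((t ^ n / fact n) *\<^sub>R (K ^^ n) x) \<le> norm x * ((\<bar>t\<bar> * c) ^ n / fact n)"
proof -
  have "norm ((t ^ n / fact n) *\<^sub>R (K ^^ n) x) = (\<bar>t\<bar> ^ n / fact n) * norm ((K ^^ n) x)"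
    by (simp add: power_abs)
  also have "\<dots> \<le> (\<bar>t\<bar> ^ n / fact n) * (c ^ n * norm x)"
    by (intro mult_left_mono norm_funpow_le assms) auto
  finally show ?thesis
    by (simp add: power_abs power_mult_distrib mult_ac)
qed

context
  fixes K :: "'a::banach \<Rightarrow> 'a"
  assumes K: "bounded_linear K"
begin

lemma summable_exp_op: "summable (\<lambda>n. (t ^ n / fact n) *\<^sub>R (K ^^ n) x)"
proof -
  obtain c where c: "0 \<le> c" "\<And>y. norm (K y) \<le> c * norm y"
    using bounded_linear.nonneg_bounded[OF K] by (auto simp: mult.commute)
  show ?thesis
    by (rule summable_comparison_test[OF _ summable_mult[OF summable_exp_generic[of "\<bar>t\<bar> * c"]]])
      (use norm_exp_op_term_le[OF c(2,1)] in \<open>auto simp: divide_inverse mult_ac\<close>)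
qed

lemma exp_op_0 [simp]: "exp_op K 0 x = x"
proof -
  have "(\<lambda>n. (0 ^ n / fact n) *\<^sub>R (K ^^ n) x) = (\<lambda>n. if n = 0 then (K ^^ n) x else 0)"
    by (rule ext) (simp add: power_0_left)
  then have "(\<lambda>n. (0 ^ n / fact n) *\<^sub>R (K ^^ n) x) sums x"
    using sums_single[of 0 "\<lambda>n. (K ^^ n) x"] by simp
  then show ?thesis
    unfolding exp_op_def by (rule sums_unique[symmetric])
qed

lemma exp_op_derivative_term_Suc:
  "(real (Suc n) * t ^ (Suc n - 1) / fact (Suc n)) *\<^sub>R (K ^^ Suc n) x
     = K ((t ^ n / fact n) *\<^sub>R (K ^^ n) x)"
proof -
  have "real (Suc n) * t ^ n / fact (Suc n) = (real (Suc n) * t ^ n) / (real (Suc n) * fact n)"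
    by (simp only: fact_Suc of_nat_mult)
  also have "\<dots> = t ^ n / fact n"
    by (rule nonzero_mult_divide_mult_cancel_left) simp
  finally have "real (Suc n) * t ^ n / fact (Suc n) = t ^ n / (fact n :: real)" .
  then show ?thesis
    by (simp add: linear.scaleR[OF bounded_linear.linear[OF K]])
qed

lemma exp_op_derivative_sums:
  "(\<lambda>n. (real n * t ^ (n - 1) / fact n) *\<^sub>R (K ^^ n) x) sums K (exp_op K t x)"
proof -
  have "(\<lambda>n. K ((t ^ n / fact n) *\<^sub>R (K ^^ n) x)) sums K (exp_op K t x)"
    unfolding exp_op_def by (intro bounded_linear.sums[OF K] summable_sums summable_exp_op)
  then have "(\<lambda>n. (real (Suc n) * t ^ (Suc n - 1) / fact (Suc n)) *\<^sub>R (K ^^ Suc n) x) sums K (exp_op K t x)"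
    by (simp only: exp_op_derivative_term_Suc)
  from sums_Suc_iff[THEN iffD1, OF this] show ?thesis
    by simp
qed

lemma uniform_limit_exp_op_derivative:
  "uniform_limit (ball t0 1) (\<lambda>n t. \<Sum>i<n. (real i * t ^ (i - 1) / fact i) *\<^sub>R (K ^^ i) x)
     (\<lambda>t. K (exp_op K t x)) sequentially"
proof -
  obtain c where c: "0 \<le> c" "\<And>y. norm (K y) \<le> c * norm y"
    using bounded_linear.nonneg_bounded[OF K] by (auto simp: mult.commute)
  define R where "R = \<bar>t0\<bar> + 1"
  define M where "M n = (if n = 0 then 0 else c * norm x * ((R * c) ^ (n - 1) / fact (n - 1)))" for n
  have "norm ((real n * t ^ (n - 1) / fact n) *\<^sub>R (K ^^ n) x) \<le> M n" if "t \<in> ball t0 1" for n t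
  proof (cases n)
    case (Suc k)
    have "norm ((real n * t ^ (n - 1) / fact n) *\<^sub>R (K ^^ n) x) \<le> c * norm ((t ^ k / fact k) *\<^sub>R (K ^^ k) x)"
      unfolding Suc exp_op_derivative_term_Suc by (rule c(2))
    also have "\<dots> \<le> c * (norm x * ((\<bar>t\<bar> * c) ^ k / fact k))"
      by (intro mult_left_mono norm_exp_op_term_le c)
    also have "\<dots> \<le> c * (norm x * ((R * c) ^ k / fact k))"
    proof -
      have "\<bar>t\<bar> \<le> R"
        using that by (auto simp: R_def dist_real_def)
      then show ?thesis
        using c(1) by (intro mult_left_mono divide_right_mono power_mono mult_right_mono) auto
    qed
    finally show ?thesis
      by (simp add: M_def Suc mult_ac)
  qed (simp add: M_def)
  moreover have "summable M"
    by (subst summable_Suc_iff[symmetric])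
      (simp add: M_def summable_exp divide_inverse mult_ac)
  ultimately have "uniform_limit (ball t0 1) (\<lambda>n t. \<Sum>i<n. (real i * t ^ (i - 1) / fact i) *\<^sub>R (K ^^ i) x)
      (\<lambda>t. \<Sum>i. (real i * t ^ (i - 1) / fact i) *\<^sub>R (K ^^ i) x) sequentially"
    by (rule Weierstrass_m_test)
  also have "(\<lambda>t. \<Sum>i. (real i * t ^ (i - 1) / fact i) *\<^sub>R (K ^^ i) x) = (\<lambda>t. K (exp_op K t x))"
    using exp_op_derivative_sums by (simp add: sums_iff)
  finally show ?thesis .
qed

lemma exp_op_has_vector_derivative:
  "((\<lambda>t. exp_op K t x) has_vector_derivative K (exp_op K t x)) (at t)"
  unfolding exp_op_def
proof (rule has_vector_derivative_series[where S="ball t 1" and a=t])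
  show "((\<lambda>t. (t ^ n / fact n) *\<^sub>R (K ^^ n) x) has_vector_derivative
      (real n * s ^ (n - 1) / fact n) *\<^sub>R (K ^^ n) x) (at s)" for n s
    by (auto intro!: derivative_eq_intros)
  show "uniform_limit (ball t 1) (\<lambda>n s. \<Sum>i<n. (real i * s ^ (i - 1) / fact i) *\<^sub>R (K ^^ i) x)
      (\<lambda>s. K (\<Sum>n. (s ^ n / fact n) *\<^sub>R (K ^^ n) x)) sequentially"
    using uniform_limit_exp_op_derivative unfolding exp_op_def .
qed (auto intro: summable_exp_op)

end

section \<open>Touchard polynomials\<close>

lemma sum_binomial_lessThan_Suc:
  fixes f :: "nat \<Rightarrow> 'a::comm_semiring_1"
  shows "(\<Sum>j<Suc n. of_nat (Suc n choose j) * f j) = f n + (\<Sum>j<n. of_nat (n choose j) * (f j + f (Suc j)))"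
proof -
  have "(\<Sum>j<Suc n. of_nat (Suc n choose j) * f j)
      = (f 0 + (\<Sum>j<n. of_nat (n choose Suc j) * f (Suc j))) + (\<Sum>j<n. of_nat (n choose j) * f (Suc j))"
    by (subst sum.lessThan_Suc_shift) (simp add: algebra_simps sum.distrib del: sum.lessThan_Suc)
  also have "f 0 + (\<Sum>j<n. of_nat (n choose Suc j) * f (Suc j)) = (\<Sum>j<Suc n. of_nat (n choose j) * f j)"
    by (subst sum.lessThan_Suc_shift) simp
  also have "\<dots> = f n + (\<Sum>j<n. of_nat (n choose j) * f j)"
    by (simp add: add.commute)
  finally show ?thesis
    by (simp add: distrib_left sum.distrib ac_simps)
qed

lemma pCons_0_sum: "pCons 0 (sum f A) = (\<Sum>x\<in>A. pCons 0 (f x))"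
  by (induction A rule: infinite_finite_induct) (simp_all, metis add_0 add_pCons)

lemma pderiv_sum: "pderiv (sum f A) = (\<Sum>x\<in>A. pderiv (f x))"
  using higher_pderiv_sum[of 1 f A] by simp

text \<open>The Touchard polynomials \<open>\<Sum>k\<le>n. S(n, k) x\<^sup>k\<close>, \<open>S\<close> the Stirling numbers of the second kind.\<close>

primrec touchard :: "nat \<Rightarrow> 'a::{comm_semiring_1,semiring_no_zero_divisors} poly" where
  "touchard 0 = 1"
| "touchard (Suc n) = pCons 0 (touchard n + pderiv (touchard n))"

lemma pderiv_touchard:
  "pderiv (touchard n) = (\<Sum>j<n. of_nat (n choose j) * touchard j)"
proof (induction n)
  case 0
  show ?case by simp
next
  case (Suc n)
  let ?T = "touchard :: nat \<Rightarrow> 'a poly"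
  let ?c = "\<lambda>j. of_nat (n choose j) :: 'a poly"
  have pCons_0_scale: "pCons 0 (?c j * p) = ?c j * pCons 0 p" for j p
    by (simp add: of_nat_poly)
  have "pCons 0 (pderiv (?T n) + pderiv (pderiv (?T n)))
      = pCons 0 (\<Sum>j<n. ?c j * (?T j + pderiv (?T j)))"
    unfolding Suc.IH by (simp add: pderiv_sum pderiv_mult distrib_left sum.distrib)
  also have "\<dots> = (\<Sum>j<n. ?c j * ?T (Suc j))"
    by (simp only: pCons_0_sum pCons_0_scale touchard.simps)
  finally have "pderiv (?T (Suc n)) = ?T n + (\<Sum>j<n. ?c j * ?T j) + (\<Sum>j<n. ?c j * ?T (Suc j))"
    by (simp add: pderiv_pCons pderiv_add Suc.IH)
  then show ?case
    by (simp only: sum_binomial_lessThan_Suc distrib_left sum.distrib add.assoc)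
qed

lemma degree_touchard [simp]:
  "degree (touchard n :: 'a::{comm_semiring_1,semiring_no_zero_divisors,semiring_char_0} poly) = n"
  and lead_coeff_touchard: "lead_coeff (touchard n :: 'a poly) = 1"
proof (induction n)
  case (Suc n)
  have "coeff (pderiv (touchard n :: 'a poly)) n = 0"
    by (simp add: coeff_pderiv coeff_eq_0 Suc.IH)
  moreover have "degree (pderiv (touchard n :: 'a poly)) \<le> n"
    by (simp add: degree_pderiv Suc.IH)
  ultimately have "coeff (touchard n + pderiv (touchard n) :: 'a poly) n = 1"
    and "degree (touchard n + pderiv (touchard n) :: 'a poly) = n"
    using Suc.IH by (auto intro!: antisym le_degree degree_add_le)
  then show "degree (touchard (Suc n) :: 'a poly) = Suc n" "lead_coeff (touchard (Suc n) :: 'a poly) = 1"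
    by auto
qed simp_all

lemma poly_touchard_nonneg:
  fixes x :: "'a::linordered_idom"
  assumes "0 \<le> x"
  shows "0 \<le> poly (touchard n) x"
proof (induction n rule: less_induct)
  case (less n)
  show ?case
  proof (cases n)
    case (Suc k)
    have "0 \<le> poly (pderiv (touchard k)) x"
      using less Suc by (auto simp: pderiv_touchard poly_sum intro!: sum_nonneg)
    with less[of k] Suc assms show ?thesis by simp
  qed simp
qed

text \<open>The solution of \<open>v\<^sub>m' = d \<Sum>k<m. (m choose k) v\<^sub>k\<close>, \<open>v\<^sub>m 0 = \<nu> m\<close>.\<close>

definition moment_bound :: "real \<Rightarrow> (nat \<Rightarrow> real) \<Rightarrow> nat \<Rightarrow> real \<Rightarrow> real" where
  "moment_bound d \<nu> m t = (\<Sum>r\<le>m. real (m choose r) * poly (touchard (m - r)) (d * t) * \<nu> r)"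

lemma sum_binomial_convolution:
  fixes G \<nu> :: "nat \<Rightarrow> 'a::comm_semiring_1"
  shows "(\<Sum>k<m. of_nat (m choose k) * (\<Sum>r\<le>k. of_nat (k choose r) * G (k - r) * \<nu> r))
       = (\<Sum>r\<le>m. of_nat (m choose r) * \<nu> r * (\<Sum>j<m - r. of_nat ((m - r) choose j) * G j))"
proof -
  let ?h = "\<lambda>r j. of_nat (m choose r) * \<nu> r * (of_nat ((m - r) choose j) * G j)"
  have "(\<Sum>k<m. of_nat (m choose k) * (\<Sum>r\<le>k. of_nat (k choose r) * G (k - r) * \<nu> r))
      = (\<Sum>k<m. \<Sum>r\<le>k. of_nat (m choose k) * (of_nat (k choose r) * G (k - r) * \<nu> r))"
    by (simp add: sum_distrib_left)
  also have "\<dots> = (\<Sum>k<m. \<Sum>r\<le>k. ?h r (k - r))"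
  proof (intro sum.cong refl)
    fix k r assume "k \<in> {..<m}" "r \<in> {..k}"
    then have "(m choose k) * (k choose r) = (m choose r) * ((m - r) choose (k - r))"
      by (intro choose_mult) auto
    then show "of_nat (m choose k) * (of_nat (k choose r) * G (k - r) * \<nu> r) = ?h r (k - r)"
      by (simp add: ac_simps flip: of_nat_mult)
  qed
  also have "\<dots> = (\<Sum>(r, j)\<in>{(r, j). r + j < m}. ?h r j)"
    by (rule sum.triangle_reindex[symmetric])
  also have "{(r, j). r + j < m} = Sigma {..m} (\<lambda>r. {..<m - r})"
    by auto
  also have "(\<Sum>(r, j)\<in>Sigma {..m} (\<lambda>r. {..<m - r}). ?h r j) = (\<Sum>r\<le>m. \<Sum>j<m - r. ?h r j)"
    by (rule sum.Sigma[symmetric]) auto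
  finally show ?thesis
    by (simp add: sum_distrib_left)
qed

lemma moment_bound_has_real_derivative:
  "(moment_bound d \<nu> m has_real_derivative d * (\<Sum>k<m. real (m choose k) * moment_bound d \<nu> k t)) (at t)"
proof -
  let ?G = "\<lambda>j. poly (touchard j) (d * t)"
  have "(moment_bound d \<nu> m has_real_derivative
      (\<Sum>r\<le>m. real (m choose r) * (d * poly (pderiv (touchard (m - r))) (d * t)) * \<nu> r)) (at t)"
    unfolding moment_bound_def[abs_def] by (auto intro!: derivative_eq_intros sum.cong simp: mult_ac)
  also have "(\<Sum>r\<le>m. real (m choose r) * (d * poly (pderiv (touchard (m - r))) (d * t)) * \<nu> r)
      = d * (\<Sum>r\<le>m. real (m choose r) * \<nu> r * (\<Sum>j<m - r. real ((m - r) choose j) * ?G j))"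
    by (simp add: pderiv_touchard poly_sum sum_distrib_left ac_simps)
  also have "\<dots> = d * (\<Sum>k<m. real (m choose k) * moment_bound d \<nu> k t)"
    unfolding moment_bound_def using sum_binomial_convolution[of m ?G \<nu>] by simp
  finally show ?thesis .
qed

definition moment_poly :: "nat \<Rightarrow> real \<Rightarrow> nat \<Rightarrow> real poly" where
  "moment_poly m d k = smult (real (m choose k)) (touchard k \<circ>\<^sub>p [:0, d:])"

lemma moment_bound_eq_sum_moment_poly:
  "moment_bound d \<nu> m t = (\<Sum>r\<le>m. poly (moment_poly m d (m - r)) t * \<nu> r)"
  unfolding moment_bound_def moment_poly_def
  by (intro sum.cong) (simp_all add: poly_pcompose binomial_symmetric[symmetric] mult_ac)

lemma moment_poly_0: "moment_poly m d 0 = 1"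
  by (simp add: moment_poly_def pcompose_1)

lemma degree_moment_poly: "d \<noteq> 0 \<Longrightarrow> k \<le> m \<Longrightarrow> degree (moment_poly m d k) = k"
  by (simp add: moment_poly_def degree_pcompose)

lemma lead_coeff_moment_poly: "d \<noteq> 0 \<Longrightarrow> lead_coeff (moment_poly m d m) = d ^ m"
  using lead_coeff_touchard[of m] by (simp add: moment_poly_def lead_coeff_comp)

lemma moment_bound_0: "moment_bound d \<nu> m 0 = \<nu> m"
proof -
  have "real (m choose r) * poly (touchard (m - r)) 0 * \<nu> r = (if r = m then \<nu> m else 0)"
    if "r \<le> m" for r
    using that by (cases "m - r") auto
  then have "moment_bound d \<nu> m 0 = (\<Sum>r\<le>m. if r = m then \<nu> m else 0)"
    unfolding moment_bound_def by (intro sum.cong) auto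
  then show ?thesis
    by simp
qed

lemma moment_bound_mono:
  assumes "\<And>r. r \<le> m \<Longrightarrow> \<nu> r \<le> \<mu> r" "0 \<le> d" "0 \<le> t"
  shows "moment_bound d \<nu> m t \<le> moment_bound d \<mu> m t"
  unfolding moment_bound_def
  using assms by (intro sum_mono mult_left_mono) (auto intro!: mult_nonneg_nonneg poly_touchard_nonneg)

lemma moment_bound_nonneg:
  assumes "\<And>r. r \<le> m \<Longrightarrow> 0 \<le> \<nu> r" "0 \<le> d" "0 \<le> t"
  shows "0 \<le> moment_bound d \<nu> m t"
  using moment_bound_mono[of m "\<lambda>_. 0" \<nu>] assms by (simp add: moment_bound_def)

section \<open>A comparison lemma\<close>

lemma sqrt_power2_add_le: "0 \<le> a \<Longrightarrow> 0 \<le> e \<Longrightarrow> sqrt (a\<^sup>2 + e) \<le> a + sqrt e"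
  by (rule real_le_lsqrt) (simp_all add: power2_sum)

text \<open>The regularisation by \<open>e\<close> avoids differentiating \<open>sqrt\<close> at \<open>0\<close>.\<close>

lemma sqrt_power2_add_minus_antimono:
  fixes h P g P' :: "real \<Rightarrow> real"
  assumes deriv_h: "\<And>s. ((\<lambda>s. (h s)\<^sup>2) has_real_derivative g s) (at s)"
    and g_le: "\<And>s. 0 \<le> s \<Longrightarrow> g s \<le> 2 * h s * P' s"
    and deriv_P: "\<And>s. (P has_real_derivative P' s) (at s)"
    and P'_nonneg: "\<And>s. 0 \<le> s \<Longrightarrow> 0 \<le> P' s"
    and "0 < e" "0 \<le> t"
  shows "sqrt ((h t)\<^sup>2 + e) - P t \<le> sqrt ((h 0)\<^sup>2 + e) - P 0"
proof (rule DERIV_nonpos_imp_nonincreasing[OF \<open>0 \<le> t\<close>])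
  fix s :: real
  assume "0 \<le> s"
  define r where "r = sqrt ((h s)\<^sup>2 + e)"
  have "0 < (h s)\<^sup>2 + e"
    using \<open>0 < e\<close> by (simp add: add_nonneg_pos)
  then have r_pos: "0 < r"
    by (simp add: r_def)
  have "((\<lambda>s. (h s)\<^sup>2 + e) has_real_derivative g s) (at s)"
    using DERIV_add[OF deriv_h DERIV_const] by simp
  from DERIV_chain2[OF DERIV_real_sqrt[OF \<open>0 < (h s)\<^sup>2 + e\<close>] this]
  have "((\<lambda>s. sqrt ((h s)\<^sup>2 + e)) has_real_derivative inverse r / 2 * g s) (at s)"
    unfolding r_def .
  then have "((\<lambda>s. sqrt ((h s)\<^sup>2 + e) - P s) has_real_derivative inverse r / 2 * g s - P' s) (at s)"
    by (rule DERIV_diff[OF _ deriv_P])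
  moreover have "inverse r / 2 * g s - P' s \<le> 0"
  proof -
    have "h s \<le> r"
      unfolding r_def using \<open>0 < e\<close> by (intro real_le_rsqrt) simp
    then have "h s * P' s \<le> r * P' s"
      using P'_nonneg[OF \<open>0 \<le> s\<close>] by (rule mult_right_mono)
    then have "g s \<le> 2 * r * P' s"
      using g_le[OF \<open>0 \<le> s\<close>] by linarith
    then show ?thesis
      using r_pos by (simp add: field_simps)
  qed
  ultimately show "\<exists>y. ((\<lambda>s. sqrt ((h s)\<^sup>2 + e) - P s) has_real_derivative y) (at s) \<and> y \<le> 0"
    by blast
qed

lemma power2_deriv_comparison:
  fixes h P g P' :: "real \<Rightarrow> real"
  assumes "\<And>s. ((\<lambda>s. (h s)\<^sup>2) has_real_derivative g s) (at s)"
    and "\<And>s. 0 \<le> s \<Longrightarrow> g s \<le> 2 * h s * P' s"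
    and "\<And>s. (P has_real_derivative P' s) (at s)"
    and "\<And>s. 0 \<le> s \<Longrightarrow> 0 \<le> P' s"
    and "\<And>s. 0 \<le> h s"
    and "h 0 \<le> P 0" "0 \<le> t"
  shows "h t \<le> P t"
proof (rule ccontr)
  assume "\<not> h t \<le> P t"
  define e where "e = ((h t - P t) / 2)\<^sup>2"
  have "0 < e" "sqrt e = (h t - P t) / 2"
    using \<open>\<not> h t \<le> P t\<close> by (simp_all add: e_def)
  have "h t \<le> sqrt ((h t)\<^sup>2 + e)"
    using \<open>0 < e\<close> by (intro real_le_rsqrt) simp
  also have "\<dots> \<le> sqrt ((h 0)\<^sup>2 + e) - P 0 + P t"
    using sqrt_power2_add_minus_antimono[OF assms(1-4) \<open>0 < e\<close> \<open>0 \<le> t\<close>] by simp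
  also have "\<dots> \<le> h 0 + sqrt e - P 0 + P t"
    using sqrt_power2_add_le[of "h 0" e] assms(5)[of 0] \<open>0 < e\<close> by simp
  finally show False
    using \<open>h 0 \<le> P 0\<close> \<open>sqrt e = (h t - P t) / 2\<close> \<open>\<not> h t \<le> P t\<close> by argo
qed

lemma has_real_derivative_norm_power2:
  fixes u :: "real \<Rightarrow> 'a::real_inner"
  assumes "(u has_vector_derivative u') (at t)"
  shows "((\<lambda>s. (norm (u s))\<^sup>2) has_real_derivative 2 * inner (u t) u') (at t)"
proof -
  from assms have u: "(u has_derivative (\<lambda>h. h *\<^sub>R u')) (at t)"
    unfolding has_vector_derivative_def .
  have "((\<lambda>s. inner (u s) (u s)) has_derivative (\<lambda>h. inner (u t) (h *\<^sub>R u') + inner (h *\<^sub>R u') (u t))) (at t)"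
    by (rule has_derivative_inner[OF u u])
  then show ?thesis
    unfolding power2_norm_eq_inner has_field_derivative_def
    by (rule has_derivative_eq_rhs) (auto simp: inner_commute[of u'] algebra_simps)
qed

section \<open>Operators on a graph of bounded degree\<close>

locale bounded_degree_graph =
  fixes E :: "'v \<Rightarrow> 'v \<Rightarrow> bool" and D :: nat
  assumes sym: "\<And>x y. E x y \<Longrightarrow> E y x"
    and finite_neighbours: "\<And>x. finite {y. E x y}"
    and card_neighbours_le: "\<And>x. card {y. E x y} \<le> D"
begin

lemma norm_adjop_power2_le: "(cmod (adjop E f x))\<^sup>2 \<le> real D * (\<Sum>y\<in>{y. E x y}. (cmod (f y))\<^sup>2)"
proof -
  have "(cmod (adjop E f x))\<^sup>2 \<le> (\<Sum>y\<in>{y. E x y}. cmod (f y))\<^sup>2"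
    unfolding adjop_def by (intro power_mono norm_sum) auto
  also have "\<dots> \<le> (\<Sum>y\<in>{y. E x y}. (cmod (f y))\<^sup>2) * card {y. E x y}"
    by (rule sum_squared_le_sum_of_squares)
  also have "\<dots> \<le> (\<Sum>y\<in>{y. E x y}. (cmod (f y))\<^sup>2) * real D"
    by (intro mult_left_mono) (auto simp: card_neighbours_le sum_nonneg)
  finally show ?thesis
    by (simp add: mult.commute)
qed

text \<open>Each vertex is counted at most \<open>D\<close> times, once from each of its neighbours.\<close>

lemma sum_sum_neighbours_le:
  fixes g :: "'v \<Rightarrow> real"
  assumes "finite F" "\<And>y. 0 \<le> g y"
  shows "(\<Sum>x\<in>F. \<Sum>y\<in>{y. E x y}. g y) \<le> real D * (\<Sum>y\<in>(\<Union>x\<in>F. {y. E x y}). g y)"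
proof -
  let ?S = "\<Union>x\<in>F. {y. E x y}"
  have "finite ?S"
    using assms finite_neighbours by auto
  have "(\<Sum>x\<in>F. \<Sum>y\<in>{y. E x y}. g y) = (\<Sum>x\<in>F. \<Sum>y\<in>?S. if E x y then g y else 0)"
  proof (rule sum.cong[OF refl])
    fix x
    assume "x \<in> F"
    then have "{y\<in>?S. E x y} = {y. E x y}"
      by auto
    then show "(\<Sum>y\<in>{y. E x y}. g y) = (\<Sum>y\<in>?S. if E x y then g y else 0)"
      using sum.inter_filter[OF \<open>finite ?S\<close>, of g "E x"] by simp
  qed
  also have "\<dots> = (\<Sum>y\<in>?S. real (card {x\<in>F. E x y}) * g y)"
    by (subst sum.swap) (simp add: sum.inter_filter[OF \<open>finite F\<close>, symmetric])
  also have "\<dots> \<le> (\<Sum>y\<in>?S. real D * g y)"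
  proof (rule sum_mono)
    fix y
    have "card {x\<in>F. E x y} \<le> card {x. E y x}"
      using sym finite_neighbours by (intro card_mono) auto
    then show "real (card {x\<in>F. E x y}) * g y \<le> real D * g y"
      using card_neighbours_le[of y] assms(2)[of y] by (intro mult_right_mono) auto
  qed
  finally show ?thesis
    by (simp add: sum_distrib_left)
qed

lemma sum_adjop_power2_le:
  assumes "in_l2 f" "finite F"
  shows "(\<Sum>x\<in>F. (cmod (adjop E f x))\<^sup>2) \<le> (real D * l2norm f)\<^sup>2"
proof -
  let ?S = "\<Union>x\<in>F. {y. E x y}"
  let ?I = "\<Sum>\<^sub>\<infinity>x. (cmod (f x))\<^sup>2"
  have "(\<Sum>x\<in>F. (cmod (adjop E f x))\<^sup>2) \<le> (\<Sum>x\<in>F. real D * (\<Sum>y\<in>{y. E x y}. (cmod (f y))\<^sup>2))"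
    by (intro sum_mono norm_adjop_power2_le)
  also have "\<dots> = real D * (\<Sum>x\<in>F. \<Sum>y\<in>{y. E x y}. (cmod (f y))\<^sup>2)"
    by (rule sum_distrib_left[symmetric])
  also have "\<dots> \<le> real D * (real D * (\<Sum>y\<in>?S. (cmod (f y))\<^sup>2))"
    by (intro mult_left_mono sum_sum_neighbours_le assms) auto
  also have "\<dots> \<le> real D * (real D * ?I)"
    using assms finite_neighbours unfolding in_l2_def
    by (intro mult_left_mono finite_sum_le_infsum) auto
  also have "\<dots> = (real D * l2norm f)\<^sup>2"
    by (simp add: l2norm_def infsum_nonneg power_mult_distrib power2_eq_square)
  finally show ?thesis .
qed

lemma in_l2_adjop:
  assumes "in_l2 f"
  shows "in_l2 (adjop E f)" "l2norm (adjop E f) \<le> real D * l2norm f"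
  using in_l2_finite_sums_bounded[OF sum_adjop_power2_le[OF assms]] by (simp_all add: l2norm_nonneg)

definition adj_l2 :: "'v l2 \<Rightarrow> 'v l2" where
  "adj_l2 f = Abs_l2 (adjop E (l2_fun f))"

lemma l2_fun_adj_l2 [simp]: "l2_fun (adj_l2 f) = adjop E (l2_fun f)"
  unfolding adj_l2_def by (simp add: in_l2_adjop)

lemma norm_adj_l2_le: "norm (adj_l2 f) \<le> real D * norm f"
  unfolding norm_l2_def by (simp add: in_l2_adjop)

lemma bounded_linear_adj_l2: "bounded_linear adj_l2"
  by (rule bounded_linear_intro[where K="real D"])
    (auto intro!: l2_eqI simp: adjop_def norm_adj_l2_le sum.distrib sum_distrib_left mult.commute
      scaleR_conv_of_real)

lemma sum_edges_fst_le:
  fixes h :: "'v \<Rightarrow> real"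
  assumes "finite P" "P \<subseteq> edges E" "\<And>x. 0 \<le> h x" "h summable_on UNIV"
  shows "(\<Sum>p\<in>P. h (fst p)) \<le> real D * (\<Sum>\<^sub>\<infinity>x. h x)"
proof -
  let ?Q = "Sigma (fst ` P) (\<lambda>x. {y. E x y})"
  have "finite ?Q"
    using assms(1) finite_neighbours by (intro finite_SigmaI) auto
  moreover have "P \<subseteq> ?Q"
    using assms(2) unfolding edges_def by force
  ultimately have "(\<Sum>p\<in>P. h (fst p)) \<le> (\<Sum>p\<in>?Q. h (fst p))"
    using assms(3) by (intro sum_mono2) auto
  also have "\<dots> = (\<Sum>(x, y)\<in>?Q. h x)"
    by (rule sum.cong) auto
  also have "\<dots> = (\<Sum>x\<in>fst ` P. real (card {y. E x y}) * h x)"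
    using assms(1) finite_neighbours by (subst sum.Sigma[symmetric]) auto
  also have "\<dots> \<le> (\<Sum>x\<in>fst ` P. real D * h x)"
    by (intro sum_mono mult_right_mono) (auto simp: card_neighbours_le assms(3))
  also have "\<dots> \<le> real D * (\<Sum>\<^sub>\<infinity>x. h x)"
    unfolding sum_distrib_left[symmetric]
    by (intro mult_left_mono finite_sum_le_infsum) (auto simp: assms)
  finally show ?thesis .
qed

lemma bij_betw_swap_edges: "bij_betw prod.swap (edges E) (edges E)"
  by (rule bij_betwI[where g=prod.swap]) (auto simp: edges_def sym)

lemma sum_edges_snd_le:
  fixes h :: "'v \<Rightarrow> real"
  assumes "finite P" "P \<subseteq> edges E" "\<And>x. 0 \<le> h x" "h summable_on UNIV"
  shows "(\<Sum>p\<in>P. h (snd p)) \<le> real D * (\<Sum>\<^sub>\<infinity>x. h x)"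
proof -
  have "(\<Sum>p\<in>P. h (snd p)) = (\<Sum>p\<in>prod.swap ` P. h (fst p))"
    by (subst sum.reindex) (auto intro: inj_on_subset[OF swap_inj_on])
  also have "\<dots> \<le> real D * (\<Sum>\<^sub>\<infinity>x. h x)"
    using assms bij_betw_swap_edges unfolding bij_betw_def by (intro sum_edges_fst_le) auto
  finally show ?thesis .
qed

lemma summable_on_edges:
  assumes "in_l2 f"
  shows "(\<lambda>p. cnj (f (fst p)) * f (snd p)) summable_on edges E"
proof (rule abs_summable_summable)
  have "(\<Sum>p\<in>P. cmod (cnj (f (fst p)) * f (snd p))) \<le> 2 * real D * (\<Sum>\<^sub>\<infinity>x. (cmod (f x))\<^sup>2)"
    if "finite P" "P \<subseteq> edges E" for P
  proof -
    have "(\<Sum>p\<in>P. cmod (cnj (f (fst p)) * f (snd p)))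
        \<le> (\<Sum>p\<in>P. (cmod (f (fst p)))\<^sup>2) + (\<Sum>p\<in>P. (cmod (f (snd p)))\<^sup>2)"
      unfolding sum.distrib[symmetric] by (intro sum_mono) (rule norm_cnj_mult_le)
    also have "\<dots> \<le> real D * (\<Sum>\<^sub>\<infinity>x. (cmod (f x))\<^sup>2) + real D * (\<Sum>\<^sub>\<infinity>x. (cmod (f x))\<^sup>2)"
      using assms that unfolding in_l2_def by (intro add_mono sum_edges_fst_le sum_edges_snd_le) auto
    finally show ?thesis
      by simp
  qed
  then show "(\<lambda>p. norm (cnj (f (fst p)) * f (snd p))) summable_on edges E"
    unfolding abs_summable_iff_bdd_above by (auto intro!: bdd_aboveI)
qed

text \<open>Swapping the endpoints of the edges conjugates each term of the double sum.\<close>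

lemma Im_inner_adjop_self:
  assumes "in_l2 f"
  shows "Im (\<Sum>\<^sub>\<infinity>x. cnj (f x) * adjop E f x) = 0"
proof -
  define c where "c p = cnj (f (fst p)) * f (snd p)" for p
  have "c summable_on edges E"
    using summable_on_edges[OF assms] unfolding c_def[abs_def] .
  have "(\<Sum>\<^sub>\<infinity>x. cnj (f x) * adjop E f x) = (\<Sum>\<^sub>\<infinity>x. \<Sum>\<^sub>\<infinity>y\<in>{y. E x y}. c (x, y))"
    by (rule infsum_cong) (simp add: c_def adjop_def sum_distrib_left finite_neighbours)
  also have "\<dots> = (\<Sum>\<^sub>\<infinity>p\<in>edges E. c p)"
  proof -
    have "edges E = Sigma UNIV (\<lambda>x. {y. E x y})"
      by (auto simp: edges_def)
    then show ?thesis
      using infsum_Sigma_banach[of c UNIV "\<lambda>x. {y. E x y}"] \<open>c summable_on edges E\<close> by simp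
  qed
  finally have sum_edges: "(\<Sum>\<^sub>\<infinity>x. cnj (f x) * adjop E f x) = (\<Sum>\<^sub>\<infinity>p\<in>edges E. c p)" .
  have "(\<Sum>\<^sub>\<infinity>p\<in>edges E. c p) = (\<Sum>\<^sub>\<infinity>p\<in>edges E. c (prod.swap p))"
    by (rule infsum_reindex_bij_betw[symmetric]) (rule bij_betw_swap_edges)
  also have "\<dots> = (\<Sum>\<^sub>\<infinity>p\<in>edges E. cnj (c p))"
    by (rule infsum_cong) (simp add: c_def)
  also have "\<dots> = cnj (\<Sum>\<^sub>\<infinity>p\<in>edges E. c p)"
    by simp
  finally show ?thesis
    unfolding sum_edges by (metis cnj.sel(2) neg_equal_zero)
qed

end

locale schroedinger_graph = bounded_degree_graph E D for E :: "'v \<Rightarrow> 'v \<Rightarrow> bool" and D +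
  fixes V :: "'v \<Rightarrow> real" and B :: real
  assumes V_bounded: "\<And>x. \<bar>V x\<bar> \<le> B"
begin

definition generator :: "'v l2 \<Rightarrow> 'v l2" where
  "generator f = mult_l2 (\<lambda>_. - \<i>) (adj_l2 f + mult_l2 (\<lambda>x. of_real (V x)) f)"

lemma l2_fun_generator: "l2_fun (generator f) x = - \<i> * ham E V (l2_fun f) x"
  unfolding generator_def ham_def
  by (simp add: l2_fun_mult_l2[of "\<lambda>_. - \<i>" 1] l2_fun_mult_l2[of "\<lambda>x. of_real (V x)" B] V_bounded)

lemma bounded_linear_generator: "bounded_linear generator"
  unfolding generator_def[abs_def]
  by (intro bounded_linear_compose[OF bounded_linear_mult_l2[of _ 1]] bounded_linear_add
      bounded_linear_adj_l2 bounded_linear_mult_l2[of _ B]) (simp_all add: V_bounded)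

lemma inner_generator_self: "inner f (generator f) = 0"
proof -
  let ?f = "l2_fun f"
  have "inner f (generator f) = (\<Sum>\<^sub>\<infinity>x. Im (cnj (?f x) * adjop E ?f x))"
    unfolding inner_l2_def l2_fun_generator ham_def by (simp add: algebra_simps)
  also have "\<dots> = Im (\<Sum>\<^sub>\<infinity>x. cnj (?f x) * adjop E ?f x)"
    by (rule infsum_Im, rule abs_summable_summable, rule abs_summable_inner_l2)
      (simp_all add: in_l2_adjop)
  also have "\<dots> = 0"
    by (simp add: Im_inner_adjop_self)
  finally show ?thesis .
qed

lemma l2_fun_funpow_generator: "l2_fun ((generator ^^ n) f) x = (- \<i>) ^ n * (ham E V ^^ n) (l2_fun f) x"
proof (induction n arbitrary: x)
  case (Suc n)
  have "ham E V (\<lambda>x. c * g x) x = c * ham E V g x" for c g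
    by (simp add: ham_def adjop_def sum_distrib_left algebra_simps)
  then show ?case
    by (simp add: l2_fun_generator Suc.IH[abs_def])
qed simp

lemma l2_fun_exp_op_generator: "l2_fun (exp_op generator t f) x = evol E V t (l2_fun f) x"
proof -
  have "l2_fun (exp_op generator t f) x = (\<Sum>n. l2_fun ((t ^ n / fact n) *\<^sub>R (generator ^^ n) f) x)"
    unfolding exp_op_def
    by (rule bounded_linear.suminf[OF bounded_linear_l2_fun summable_exp_op[OF bounded_linear_generator]])
  also have "\<dots> = evol E V t (l2_fun f) x"
  proof -
    have "(- (\<i> * of_real t)) ^ n = of_real t ^ n * (- \<i>) ^ n" for n
      by (metis minus_mult_left mult.commute power_mult_distrib)
    then show ?thesis
      unfolding evol_def by (intro suminf_cong) (simp add: l2_fun_funpow_generator scaleR_conv_of_real)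
  qed
  finally show ?thesis .
qed

end

section \<open>Weighted estimates\<close>

lemma abs_power_diff_le_binomial:
  fixes a b :: real
  assumes "0 \<le> a" "0 \<le> b" "\<bar>a - b\<bar> \<le> 1"
  shows "\<bar>a ^ m - b ^ m\<bar> \<le> (\<Sum>k<m. real (m choose k) * b ^ k)"
proof (cases "b \<le> a")
  case True
  have "a ^ m \<le> (b + 1) ^ m"
    using assms True by (intro power_mono) auto
  also have "\<dots> = (\<Sum>k<m. real (m choose k) * b ^ k) + b ^ m"
    using binomial_ring[of b 1 m] by (simp add: lessThan_Suc_atMost[symmetric])
  finally show ?thesis
    using True assms by (simp add: power_mono)
next
  case False
  have "b ^ m - a ^ m = (b - a) * (\<Sum>i<m. a ^ (m - Suc i) * b ^ i)"
    by (rule power_diff_sumr2)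
  also have "\<dots> \<le> 1 * (\<Sum>i<m. b ^ (m - Suc i) * b ^ i)"
    using assms False by (intro mult_mono sum_mono mult_right_mono power_mono sum_nonneg) auto
  also have "\<dots> = real m * b ^ (m - 1)"
    by (simp add: power_add[symmetric])
  also have "\<dots> \<le> (\<Sum>k<m. real (m choose k) * b ^ k)"
  proof (cases m)
    case (Suc n)
    then have "real m * b ^ (m - 1) = real (m choose n) * b ^ n"
      by simp
    also have "\<dots> \<le> (\<Sum>k<m. real (m choose k) * b ^ k)"
      using Suc assms by (intro member_le_sum) auto
    finally show ?thesis .
  qed simp
  finally show ?thesis
    using False assms by (simp add: power_mono)
qed

locale lipschitz_weight = schroedinger_graph E D V B for E :: "'v \<Rightarrow> 'v \<Rightarrow> bool" and D V B +
  fixes w :: "'v \<Rightarrow> real" and W :: real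
  assumes w_nonneg: "\<And>x. 0 \<le> w x" and w_le: "\<And>x. w x \<le> W"
    and w_lipschitz: "\<And>x y. E x y \<Longrightarrow> \<bar>w x - w y\<bar> \<le> 1"
begin

definition weight :: "nat \<Rightarrow> 'v l2 \<Rightarrow> 'v l2" where
  "weight k = mult_l2 (\<lambda>x. of_real (w x ^ k))"

lemma cmod_weight_le: "cmod (of_real (w x ^ k)) \<le> W ^ k"
  using w_nonneg[of x] w_le[of x] by (simp add: norm_power power_mono)

lemma l2_fun_weight: "l2_fun (weight k f) x = of_real (w x ^ k) * l2_fun f x"
  by (simp only: weight_def l2_fun_mult_l2[OF cmod_weight_le])

lemma bounded_linear_weight: "bounded_linear (weight k)"
  unfolding weight_def by (rule bounded_linear_mult_l2[OF cmod_weight_le])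

lemma l2_fun_commutator:
  "l2_fun (weight m (generator f) - generator (weight m f)) x
     = - \<i> * (\<Sum>y\<in>{y. E x y}. of_real (w x ^ m - w y ^ m) * l2_fun f y)"
  by (simp add: l2_fun_weight l2_fun_generator ham_def adjop_def sum_distrib_left
      sum_subtractf[symmetric] algebra_simps)

text \<open>Since \<open>w\<close> is \<open>1\<close>-Lipschitz along edges, commuting \<open>w ^ m\<close> past the adjacency operator
  costs only lower powers of \<open>w\<close>.\<close>

lemma norm_commutator_le:
  "norm (weight m (generator f) - generator (weight m f))
     \<le> real D * (\<Sum>k<m. real (m choose k) * norm (weight k f))"
proof -
  define G where "G = (\<Sum>k<m. real (m choose k) *\<^sub>R abs_l2 (weight k f))"
  define g where "g x = (\<Sum>y\<in>{y. E x y}. (\<Sum>k<m. real (m choose k) * w y ^ k) * cmod (l2_fun f y))" for x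
  have G: "l2_fun (adj_l2 G) x = of_real (g x)" for x
    unfolding G_def g_def l2_fun_adj_l2 adjop_def
    by (simp add: l2_fun_sum l2_fun_weight norm_mult norm_power w_nonneg scaleR_conv_of_real
        sum_distrib_left sum_distrib_right mult_ac)
  have "norm (weight m (generator f) - generator (weight m f)) \<le> norm (adj_l2 G)"
  proof (rule norm_l2_mono)
    fix x
    have "cmod (l2_fun (weight m (generator f) - generator (weight m f)) x)
        = cmod (\<Sum>y\<in>{y. E x y}. of_real (w x ^ m - w y ^ m) * l2_fun f y)"
      unfolding l2_fun_commutator by (simp only: norm_mult norm_minus_cancel norm_ii mult_1)
    also have "\<dots> \<le> (\<Sum>y\<in>{y. E x y}. cmod (of_real (w x ^ m - w y ^ m) * l2_fun f y))"
      by (rule norm_sum)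
    also have "\<dots> = (\<Sum>y\<in>{y. E x y}. \<bar>w x ^ m - w y ^ m\<bar> * cmod (l2_fun f y))"
      by (simp only: norm_mult norm_of_real)
    also have "\<dots> \<le> (\<Sum>y\<in>{y. E x y}. (\<Sum>k<m. real (m choose k) * w y ^ k) * cmod (l2_fun f y))"
      by (intro sum_mono mult_right_mono abs_power_diff_le_binomial w_nonneg w_lipschitz) auto
    also have "\<dots> = cmod (l2_fun (adj_l2 G) x)"
    proof -
      have "0 \<le> g x"
        unfolding g_def by (intro sum_nonneg mult_nonneg_nonneg) (auto simp: w_nonneg)
      then show ?thesis
        unfolding G norm_of_real g_def by simp
    qed
    finally show "cmod (l2_fun (weight m (generator f) - generator (weight m f)) x) \<le> cmod (l2_fun (adj_l2 G) x)" .
  qed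
  also have "\<dots> \<le> real D * norm G"
    by (rule norm_adj_l2_le)
  also have "norm G \<le> (\<Sum>k<m. real (m choose k) * norm (weight k f))"
    unfolding G_def by (rule norm_sum[THEN order_trans]) simp
  finally show ?thesis
    by (simp add: mult_left_mono)
qed

lemma inner_weight_generator_le:
  "inner (weight m u) (weight m (generator u))
     \<le> norm (weight m u) * (real D * (\<Sum>k<m. real (m choose k) * norm (weight k u)))"
proof -
  have "inner (weight m u) (weight m (generator u))
      = inner (weight m u) (weight m (generator u) - generator (weight m u))"
    by (simp add: inner_diff_right inner_generator_self)
  also have "\<dots> \<le> norm (weight m u) * norm (weight m (generator u) - generator (weight m u))"
    by (rule norm_cauchy_schwarz)
  also have "\<dots> \<le> norm (weight m u) * (real D * (\<Sum>k<m. real (m choose k) * norm (weight k u)))"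
    by (intro mult_left_mono norm_commutator_le) simp
  finally show ?thesis .
qed

lemma norm_weight_exp_op_le:
  assumes "0 \<le> t"
  shows "norm (weight m (exp_op generator t \<psi>)) \<le> moment_bound D (\<lambda>r. norm (weight r \<psi>)) m t"
  using assms
proof (induction m arbitrary: t rule: less_induct)
  case (less m)
  let ?u = "\<lambda>s. exp_op generator s \<psi>"
  let ?\<nu> = "\<lambda>r. norm (weight r \<psi>)"
  let ?P' = "\<lambda>s. real D * (\<Sum>k<m. real (m choose k) * moment_bound D ?\<nu> k s)"
  show ?case
  proof (rule power2_deriv_comparison[where P'="?P'" and h="\<lambda>s. norm (weight m (?u s))"
        and g="\<lambda>s. 2 * inner (weight m (?u s)) (weight m (generator (?u s)))"])
    show "((\<lambda>s. (norm (weight m (?u s)))\<^sup>2) has_real_derivative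
        2 * inner (weight m (?u s)) (weight m (generator (?u s)))) (at s)" for s
      by (rule has_real_derivative_norm_power2, rule bounded_linear.has_vector_derivative[OF bounded_linear_weight],
          rule exp_op_has_vector_derivative[OF bounded_linear_generator])
    show "2 * inner (weight m (?u s)) (weight m (generator (?u s))) \<le> 2 * norm (weight m (?u s)) * ?P' s"
      if "0 \<le> s" for s
    proof -
      have "(\<Sum>k<m. real (m choose k) * norm (weight k (?u s))) \<le> (\<Sum>k<m. real (m choose k) * moment_bound D ?\<nu> k s)"
        using less.IH \<open>0 \<le> s\<close> by (intro sum_mono mult_left_mono) auto
      then have "norm (weight m (?u s)) * (real D * (\<Sum>k<m. real (m choose k) * norm (weight k (?u s))))
          \<le> norm (weight m (?u s)) * ?P' s"
        by (intro mult_left_mono) auto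
      with inner_weight_generator_le[of m "?u s"] show ?thesis
        by linarith
    qed
    show "(moment_bound D ?\<nu> m has_real_derivative ?P' s) (at s)" for s
      by (rule moment_bound_has_real_derivative)
    show "0 \<le> ?P' s" if "0 \<le> s" for s
      using that by (intro mult_nonneg_nonneg sum_nonneg moment_bound_nonneg) auto
  qed (simp_all add: moment_bound_0 bounded_linear_generator less.prems)
qed

end

section \<open>Graph distance\<close>

lemma relpow_gdist: "(x, y) \<in> (edges E)\<^sup>* \<Longrightarrow> (x, y) \<in> edges E ^^ gdist E x y"
  unfolding gdist_def by (rule LeastI_ex) (simp add: rtrancl_power)

lemma gdist_le_Suc_gdist:
  assumes "E x y" "(y, z) \<in> (edges E)\<^sup>*"
  shows "gdist E x z \<le> Suc (gdist E y z)"
proof -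
  have "(x, z) \<in> edges E ^^ Suc (gdist E y z)"
    using assms relpow_gdist[OF assms(2)] by (intro relpow_Suc_I2) (simp_all add: edges_def)
  then show ?thesis
    unfolding gdist_def by (rule Least_le)
qed

lemma abs_gdist_diff_le:
  assumes "E x y" "E y x" "(x, z) \<in> (edges E)\<^sup>*" "(y, z) \<in> (edges E)\<^sup>*"
  shows "\<bar>real (gdist E x z) - real (gdist E y z)\<bar> \<le> 1"
  using gdist_le_Suc_gdist[OF assms(1,4)] gdist_le_Suc_gdist[OF assms(2,3)] by linarith

lemma wfin_iff_in_l2: "wfin E z m \<psi> \<longleftrightarrow> in_l2 (\<lambda>x. of_real (real (gdist E x z) ^ m) * \<psi> x)"
  and wnorm_eq_l2norm: "wnorm E z m \<psi> = l2norm (\<lambda>x. of_real (real (gdist E x z) ^ m) * \<psi> x)"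
  unfolding wfin_def wnorm_def in_l2_def l2norm_def
  by (simp_all add: norm_mult norm_power power_mult_distrib power_mult[symmetric] mult.commute)

lemma wnorm_0_eq_l2norm: "wnorm E z 0 \<psi> = l2norm \<psi>"
  by (simp add: wnorm_def l2norm_def)

lemma wfin_mono:
  assumes "in_l2 \<psi>" "wfin E z m \<psi>" "r \<le> m"
  shows "wfin E z r \<psi>"
  unfolding wfin_iff_in_l2
proof (rule in_l2_mono)
  show "in_l2 (\<lambda>x. \<psi> x + of_real (real (gdist E x z) ^ m) * \<psi> x)"
    using in_l2_add[OF assms(1) assms(2)[unfolded wfin_iff_in_l2]] .
  fix x
  let ?d = "real (gdist E x z)"
  have "?d ^ r \<le> 1 + ?d ^ m"
  proof (cases "gdist E x z = 0")
    case False
    then have "?d ^ r \<le> ?d ^ m"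
      using \<open>r \<le> m\<close> by (intro power_increasing) auto
    then show ?thesis
      by simp
  qed (simp add: power_0_left)
  moreover have "\<psi> x + of_real (?d ^ m) * \<psi> x = of_real (1 + ?d ^ m) * \<psi> x"
    by (simp add: algebra_simps)
  ultimately show "cmod (of_real (?d ^ r) * \<psi> x) \<le> cmod (\<psi> x + of_real (?d ^ m) * \<psi> x)"
    by (simp only: norm_mult norm_of_real) (simp add: mult_right_mono)
qed

context lipschitz_weight
begin

lemma norm_weight_le_wnorm:
  assumes "\<And>x. w x \<le> gdist E x z" "wfin E z r (l2_fun f)"
  shows "norm (weight r f) \<le> wnorm E z r (l2_fun f)"
  unfolding norm_l2_def wnorm_eq_l2norm
proof (rule l2norm_mono)
  show "in_l2 (\<lambda>x. of_real (real (gdist E x z) ^ r) * l2_fun f x)"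
    using assms(2) by (simp add: wfin_iff_in_l2)
  show "cmod (l2_fun (weight r f) x) \<le> cmod (of_real (real (gdist E x z) ^ r) * l2_fun f x)" for x
    using assms(1)[of x] w_nonneg[of x]
    by (simp add: l2_fun_weight norm_mult norm_power mult_right_mono power_mono)
qed

lemma sum_gdist_power_le_norm_weight:
  assumes "finite F" "\<And>x. x \<in> F \<Longrightarrow> w x = gdist E x z"
  shows "(\<Sum>x\<in>F. (cmod (of_real (real (gdist E x z) ^ m) * l2_fun f x))\<^sup>2) \<le> (norm (weight m f))\<^sup>2"
proof -
  have "(\<Sum>x\<in>F. (cmod (of_real (real (gdist E x z) ^ m) * l2_fun f x))\<^sup>2)
      = (\<Sum>x\<in>F. (cmod (l2_fun (weight m f) x))\<^sup>2)"
    using assms(2) by (intro sum.cong) (simp_all add: l2_fun_weight)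
  also have "\<dots> \<le> (norm (weight m f))\<^sup>2"
    using assms(1) by (rule sum_le_norm_l2_power2)
  finally show ?thesis .
qed

end

text \<open>The distance truncated at its maximum on a finite set \<open>F\<close> is a bounded weight, Lipschitz along
  edges, that agrees with the distance on \<open>F\<close>; the resulting bound does not depend on the truncation.\<close>

lemma (in schroedinger_graph) sum_gdist_power_evol_le:
  assumes conn: "\<forall>x y. (x, y) \<in> (edges E)\<^sup>*"
    and \<psi>: "in_l2 \<psi>" "wfin E z m \<psi>" and "0 \<le> t" "finite F"
  shows "(\<Sum>x\<in>F. (cmod (of_real (real (gdist E x z) ^ m) * evol E V t \<psi> x))\<^sup>2)
           \<le> (moment_bound D (\<lambda>r. wnorm E z r \<psi>) m t)\<^sup>2"
proof -
  let ?f = "Abs_l2 \<psi>"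
  define N where "N = Max (insert 0 ((\<lambda>x. gdist E x z) ` F))"
  define w where "w x = min (real (gdist E x z)) (real N)" for x
  interpret lipschitz_weight E D V B w "real N"
  proof unfold_locales
    show "\<bar>w x - w y\<bar> \<le> 1" if "E x y" for x y
      using abs_gdist_diff_le[OF that sym[OF that] conn[rule_format] conn[rule_format], where z=z]
      unfolding w_def by linarith
  qed (auto simp: w_def)
  have w_F: "w x = gdist E x z" if "x \<in> F" for x
    using \<open>finite F\<close> that unfolding w_def N_def by (simp add: min_absorb1)
  have "(\<Sum>x\<in>F. (cmod (of_real (real (gdist E x z) ^ m) * evol E V t \<psi> x))\<^sup>2)
      = (\<Sum>x\<in>F. (cmod (of_real (real (gdist E x z) ^ m) * l2_fun (exp_op generator t ?f) x))\<^sup>2)"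
    using \<psi>(1) by (simp add: l2_fun_exp_op_generator)
  also have "\<dots> \<le> (norm (weight m (exp_op generator t ?f)))\<^sup>2"
    by (rule sum_gdist_power_le_norm_weight[OF \<open>finite F\<close> w_F])
  also have "\<dots> \<le> (moment_bound D (\<lambda>r. wnorm E z r \<psi>) m t)\<^sup>2"
  proof (intro power_mono order_trans[OF norm_weight_exp_op_le moment_bound_mono])
    show "norm (weight r ?f) \<le> wnorm E z r \<psi>" if "r \<le> m" for r
      using norm_weight_le_wnorm[of z r ?f] wfin_mono[OF \<psi> that] \<psi>(1) by (simp add: w_def)
  qed (simp_all add: \<open>0 \<le> t\<close>)
  finally show ?thesis .
qed

lemma (in schroedinger_graph) wnorm_evol_le:
  assumes conn: "\<forall>x y. (x, y) \<in> (edges E)\<^sup>*"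
    and \<psi>: "in_l2 \<psi>" "wfin E z m \<psi>" and "0 \<le> t"
  shows "wfin E z m (evol E V t \<psi>) \<and> wnorm E z m (evol E V t \<psi>) \<le> moment_bound D (\<lambda>r. wnorm E z r \<psi>) m t"
proof -
  have "0 \<le> moment_bound D (\<lambda>r. wnorm E z r \<psi>) m t"
    by (intro moment_bound_nonneg) (simp_all add: wnorm_eq_l2norm l2norm_nonneg \<open>0 \<le> t\<close>)
  with in_l2_finite_sums_bounded[OF sum_gdist_power_evol_le[OF assms]] show ?thesis
    by (simp add: wfin_iff_in_l2 wnorm_eq_l2norm)
qed

section \<open>Growth of moments\<close>

lemma power_divide_power_tendsto:
  assumes "i \<le> m"
  shows "((\<lambda>t::real. t ^ i / t ^ m) \<longlongrightarrow> (if i = m then 1 else 0)) at_top"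
proof (cases "i = m")
  case True
  have "\<forall>\<^sub>F t in at_top. t ^ i / t ^ m = (1::real)"
    using eventually_gt_at_top[of "0::real"] by eventually_elim (simp add: True)
  then show ?thesis
    using True tendsto_eventually by force
next
  case False
  have "filterlim (\<lambda>t::real. t ^ (m - i)) at_top at_top"
    using assms False by (intro filterlim_pow_at_top filterlim_ident) auto
  then have "((\<lambda>t::real. inverse (t ^ (m - i))) \<longlongrightarrow> 0) at_top"
    by (rule tendsto_inverse_0_at_top)
  moreover have "\<forall>\<^sub>F t in at_top. inverse (t ^ (m - i)) = (t::real) ^ i / t ^ m"
    using eventually_gt_at_top[of "0::real"] by eventually_elim (use assms in \<open>simp add: power_diff field_simps\<close>)
  ultimately show ?thesis
    using False by (simp add: tendsto_cong)
qed

lemma poly_divide_power_tendsto: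
  fixes p :: "real poly"
  assumes "degree p \<le> m"
  shows "((\<lambda>t. poly p t / t ^ m) \<longlongrightarrow> coeff p m) at_top"
proof -
  have "poly p t / t ^ m = (\<Sum>i\<le>m. coeff p i * (t ^ i / t ^ m))" for t
  proof -
    have "poly p t = (\<Sum>i\<le>m. coeff p i * t ^ i)"
      unfolding poly_altdef using assms by (intro sum.mono_neutral_left) (auto simp: coeff_eq_0)
    then show ?thesis
      by (simp add: sum_divide_distrib)
  qed
  moreover have "((\<lambda>t. \<Sum>i\<le>m. coeff p i * (t ^ i / t ^ m)) \<longlongrightarrow> (\<Sum>i\<le>m. coeff p i * (if i = m then 1 else 0))) at_top"
    by (intro tendsto_sum tendsto_mult tendsto_const power_divide_power_tendsto) simp
  moreover have "(\<Sum>i\<le>m. coeff p i * (if i = m then 1 else 0)) = coeff p m"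
    by (simp add: if_distrib cong: if_cong)
  ultimately show ?thesis
    by (simp only:)
qed

lemma Limsup_divide_power_le:
  fixes p :: "nat \<Rightarrow> real poly" and f c :: "_ \<Rightarrow> real"
  assumes deg: "\<And>k. k \<le> m \<Longrightarrow> degree (p k) = k"
    and bound: "\<And>t. 0 \<le> t \<Longrightarrow> f t \<le> (\<Sum>r\<le>m. poly (p (m - r)) t * c r)"
  shows "Limsup at_top (\<lambda>t. ereal (f t / t ^ m)) \<le> ereal (lead_coeff (p m) * c 0)"
proof -
  let ?b = "\<lambda>t. \<Sum>r\<le>m. poly (p (m - r)) t / t ^ m * c r"
  have "(?b \<longlongrightarrow> (\<Sum>r\<le>m. coeff (p (m - r)) m * c r)) at_top"
    by (intro tendsto_sum tendsto_mult tendsto_const poly_divide_power_tendsto) (simp add: deg)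
  also have "(\<Sum>r\<le>m. coeff (p (m - r)) m * c r) = (\<Sum>r\<le>m. if r = 0 then lead_coeff (p m) * c 0 else 0)"
    using deg by (intro sum.cong) (auto simp: coeff_eq_0)
  finally have lim: "(?b \<longlongrightarrow> lead_coeff (p m) * c 0) at_top"
    by simp
  have "\<forall>\<^sub>F t in at_top. ereal (f t / t ^ m) \<le> ereal (?b t)"
    using eventually_gt_at_top[of 0]
  proof eventually_elim
    case (elim t)
    then have "f t / t ^ m \<le> (\<Sum>r\<le>m. poly (p (m - r)) t * c r) / t ^ m"
      by (intro divide_right_mono bound) simp_all
    also have "\<dots> = ?b t"
      unfolding sum_divide_distrib by (rule sum.cong) simp_all
    finally show ?case
      by simp
  qed
  then have "Limsup at_top (\<lambda>t. ereal (f t / t ^ m)) \<le> Limsup at_top (\<lambda>t. ereal (?b t))"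
    by (rule Limsup_mono)
  also have "\<dots> = ereal (lead_coeff (p m) * c 0)"
    using lim by (intro lim_imp_Limsup tendsto_ereal) simp_all
  finally show ?thesis .
qed

theorem theoremA1:
  fixes E :: "'v::countable \<Rightarrow> 'v \<Rightarrow> bool" and V :: "'v \<Rightarrow> real"
    and D :: nat and ob :: 'v and m :: nat
  assumes sym: "\<forall>x y. E x y \<longrightarrow> E y x"
    and irrefl: "\<forall>x. \<not> E x x"
    and conn: "\<forall>x y. (x, y) \<in> (edges E)\<^sup>*"
    and deg: "\<forall>x. finite {y. E x y} \<and> card {y. E x y} \<le> D"
    and D_pos: "D \<ge> 1"
    and Vbdd: "\<exists>B. \<forall>x. \<bar>V x\<bar> \<le> B"
  shows "(\<exists>p :: nat \<Rightarrow> real poly.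
            (\<forall>k\<le>m. degree (p k) = k) \<and> p 0 = 1 \<and> lead_coeff (p m) = real D ^ m \<and>
            (\<forall>t \<ge> 0. \<forall>\<psi>. in_l2 \<psi> \<and> wfin E ob m \<psi> \<longrightarrow>
               wfin E ob m (evol E V t \<psi>) \<and>
               wnorm E ob m (evol E V t \<psi>)
                 \<le> (\<Sum>r\<le>m. poly (p (m - r)) t * wnorm E ob r \<psi>)))
       \<and> (\<forall>\<psi>. in_l2 \<psi> \<and> wfin E ob m \<psi> \<longrightarrow>
            Limsup (at_top :: real filter) (\<lambda>t. ereal (wnorm E ob m (evol E V t \<psi>) / t ^ m))
              \<le> ereal (real D ^ m * l2norm \<psi>))"
proof -
  obtain B where "\<forall>x. \<bar>V x\<bar> \<le> B"
    using Vbdd by blast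
  then interpret schroedinger_graph E D V B
    using sym deg by unfold_locales auto
  let ?p = "moment_poly m (real D)"
  have D: "real D \<noteq> 0"
    using D_pos by simp
  have bound: "wfin E ob m (evol E V t \<psi>) \<and>
      wnorm E ob m (evol E V t \<psi>) \<le> (\<Sum>r\<le>m. poly (?p (m - r)) t * wnorm E ob r \<psi>)"
    if "0 \<le> t" "in_l2 \<psi>" "wfin E ob m \<psi>" for t \<psi>
    using wnorm_evol_le[OF conn that(2,3,1)] by (simp add: moment_bound_eq_sum_moment_poly)
  have "Limsup at_top (\<lambda>t. ereal (wnorm E ob m (evol E V t \<psi>) / t ^ m))
      \<le> ereal (lead_coeff (?p m) * wnorm E ob 0 \<psi>)"
    if "in_l2 \<psi>" "wfin E ob m \<psi>" for \<psi>
    by (rule Limsup_divide_power_le) (use bound[OF _ that] degree_moment_poly[OF D] in auto)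
  then show ?thesis
    using bound degree_moment_poly[OF D] lead_coeff_moment_poly[OF D]
    by (intro conjI exI[of _ ?p]) (simp_all add: moment_poly_0 wnorm_0_eq_l2norm)
qed

end
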